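(* In the bird flocking model, suppose the number of flocks never exceeds $m$. There is a constant $c=c(\varepsilon_o)$ such that, for every bird $i$ and every time $t>1$, $$\Big\|v_i(t)-\frac1t\big(x_i(t)-x_i(0)\big)\Big\|\le c\,n^{2(m+2)}\Big(\frac1\rho\Big)^{m+1}\frac{\log t}{t}.$$
   Context: Bird flocking model: there are $n$ birds with positions $x_i(t)\in\mathbb{R}^3$ and velocities $v_i(t)\in\mathbb{R}^3$. Fix $r\in(0,1]$ and a small $\varepsilon_o>0$. The flocking network $G_t$ is an undirected graph on the birds, defined as follows: - a pair $\{i,j\}$ that is an edge of $G_{t-1}$ is an edge of $G_t$ iff $\|x_i(t)-x_j(t)\|\le r$; - a pair not in $G_{t-1}$ becomes an edge of $G_t$ iff $\|x_i(t)-x_j(t)\|\le r$ and $\|v_i(t)-v_j(t)\|>\varepsilon_o$. The connected components of $G_t$ are the flocks. Let $\mathcal N_i(t)$ be the set of neighbors $j\ne i$ of $i$ in $G_t$. The dynamics is $$x_i(t+1)=x_i(t)+v_i(t+1),\qquad v_i(t+1)=v_i(t)+a_i\sum_{j\in\mathcal N_i(t)}(v_j(t)-v_i(t)),$$ with fixed weights $a_i$ satisfying $0<a_i\le 1/(|\mathcal N_i(t)|+1)$ for all $t$. Set $\rho=\min_ia_i\in(0,1/2]$. The initial conditions satisfy $\|x_i(0)\|\le1$ and $\|v_i(0)\|\le\frac12\sqrt{\rho/n}$ for all $i$. *)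

theory Defs
  imports "HOL-Analysis.Analysis"
begin

text \<open>Positions and velocities: x t i, v t i :: real^3 (bird i at time t; birds are 0..<n).\<close>

text \<open>Flocking network G_t (edge relation), with the convention G_{-1} = empty graph.\<close>
fun flock_edge :: "real \<Rightarrow> real \<Rightarrow> (nat \<Rightarrow> nat \<Rightarrow> real^3) \<Rightarrow> (nat \<Rightarrow> nat \<Rightarrow> real^3)
                    \<Rightarrow> nat \<Rightarrow> nat \<Rightarrow> nat \<Rightarrow> bool" where
  "flock_edge r eps x v 0 i j =
     (i \<noteq> j \<and> norm (x 0 i - x 0 j) \<le> r \<and> norm (v 0 i - v 0 j) > eps)"
| "flock_edge r eps x v (Suc t) i j =
     (i \<noteq> j \<and> norm (x (Suc t) i - x (Suc t) j) \<le> r \<and>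
      (flock_edge r eps x v t i j \<or> norm (v (Suc t) i - v (Suc t) j) > eps))"

definition nbrs :: "nat \<Rightarrow> real \<Rightarrow> real \<Rightarrow> (nat \<Rightarrow> nat \<Rightarrow> real^3) \<Rightarrow> (nat \<Rightarrow> nat \<Rightarrow> real^3)
                    \<Rightarrow> nat \<Rightarrow> nat \<Rightarrow> nat set" where
  "nbrs n r eps x v t i = {j. j < n \<and> flock_edge r eps x v t i j}"

definition flocks :: "nat \<Rightarrow> real \<Rightarrow> real \<Rightarrow> (nat \<Rightarrow> nat \<Rightarrow> real^3) \<Rightarrow> (nat \<Rightarrow> nat \<Rightarrow> real^3)
                    \<Rightarrow> nat \<Rightarrow> nat set set" where
  "flocks n r eps x v t =
     {..<n} // {(i, j). i < n \<and> j < n \<and>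
        (\<lambda>a b. a < n \<and> b < n \<and> flock_edge r eps x v t a b)\<^sup>*\<^sup>* i j}"

definition flocking_system :: "nat \<Rightarrow> real \<Rightarrow> real \<Rightarrow> (nat \<Rightarrow> real)
     \<Rightarrow> (nat \<Rightarrow> nat \<Rightarrow> real^3) \<Rightarrow> (nat \<Rightarrow> nat \<Rightarrow> real^3) \<Rightarrow> bool" where
  "flocking_system n r eps a x v \<longleftrightarrow>
     0 < r \<and> r \<le> 1 \<and> 0 < eps \<and>
     (\<forall>i<n. 0 < a i \<and> (\<forall>t. a i \<le> 1 / (real (card (nbrs n r eps x v t i)) + 1))) \<and>
     Min (a ` {..<n}) \<le> 1/2 \<and>
     (\<forall>t. \<forall>i<n. v (Suc t) i =
         v t i + a i *\<^sub>R (\<Sum>j\<in>nbrs n r eps x v t i. v t j - v t i)) \<and>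
     (\<forall>t. \<forall>i<n. x (Suc t) i = x t i + v (Suc t) i) \<and>
     (\<forall>i<n. norm (x 0 i) \<le> 1 \<and>
            norm (v 0 i) \<le> 1/2 * sqrt (Min (a ` {..<n}) / real n))"

end

theory Submission imports Defs begin

text \<open>
  With the weights \<open>1 / a i\<close> the update becomes symmetric, so the weighted kinetic energy
  \<open>\<Sum>i. norm (v i)^2 / a i\<close> is non-increasing and drops in each step by at least
  \<open>1/n\<close> times the dissipation \<open>D\<close> along the edges. The weighted mean velocity of each flock
  is conserved, and as long as no edge is created flocks can only split; together with the
  discrete Poincare inequality \<open>R \<le> n^5 / rho * D\<close> this makes the within-flock spread
  \<open>R\<close> decay geometrically. A newly created edge needs a velocity gap \<open>eps\<close>, so it costs
  \<open>eps^4\<close> of energy and only boundedly many edges are ever created; moreover after a quiet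
  stretch the velocities settle, so two birds with relative velocity above \<open>eps\<close> drift apart
  linearly and the next creation has to happen within a bounded window. Hence from a time on
  that depends on \<open>eps\<close> only, the velocity increments decay geometrically, and the average
  velocity \<open>(x t - x 0) / t\<close> is within \<open>O(1/t)\<close> of \<open>v t\<close>.

  Because all initial speeds are at most \<open>sqrt (rho / n) / 2\<close>, an edge can only ever form
  when \<open>n * eps^2 \<le> 1\<close> and \<open>eps^2 \<le> rho\<close>; then all rates depend on \<open>eps\<close> alone. The
  result is a bound \<open>c(eps) / t\<close>, stronger than the stated one, which does not need the
  bound \<open>m\<close> on the number of flocks.
\<close>

section \<open>Weighted means over an equivalence relation\<close>

definition equiv_below :: "(nat \<Rightarrow> nat \<Rightarrow> bool) \<Rightarrow> nat \<Rightarrow> bool" where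
  "equiv_below q n \<longleftrightarrow> (\<forall>i<n. q i i) \<and> symp q \<and> transp q"

definition eclass :: "(nat \<Rightarrow> nat \<Rightarrow> bool) \<Rightarrow> nat \<Rightarrow> nat \<Rightarrow> nat set" where
  "eclass q n i = {j. j < n \<and> q i j}"

definition eclass_weight :: "(nat \<Rightarrow> nat \<Rightarrow> bool) \<Rightarrow> (nat \<Rightarrow> real) \<Rightarrow> nat \<Rightarrow> nat \<Rightarrow> real" where
  "eclass_weight q w n i = (\<Sum>j\<in>eclass q n i. w j)"

definition eclass_mean ::
    "(nat \<Rightarrow> nat \<Rightarrow> bool) \<Rightarrow> (nat \<Rightarrow> real) \<Rightarrow> nat \<Rightarrow> (nat \<Rightarrow> 'a::real_vector) \<Rightarrow> nat \<Rightarrow> 'a" where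
  "eclass_mean q w n y i = (1 / eclass_weight q w n i) *\<^sub>R (\<Sum>j\<in>eclass q n i. w j *\<^sub>R y j)"

definition wenergy :: "(nat \<Rightarrow> real) \<Rightarrow> nat \<Rightarrow> (nat \<Rightarrow> 'a::real_normed_vector) \<Rightarrow> real" where
  "wenergy w n y = (\<Sum>i<n. w i * norm (y i)^2)"

definition wdeviation ::
    "(nat \<Rightarrow> nat \<Rightarrow> bool) \<Rightarrow> (nat \<Rightarrow> real) \<Rightarrow> nat \<Rightarrow> (nat \<Rightarrow> 'a::real_normed_vector) \<Rightarrow> real" where
  "wdeviation q w n y = wenergy w n (\<lambda>i. y i - eclass_mean q w n y i)"

definition wmean_energy ::
    "(nat \<Rightarrow> nat \<Rightarrow> bool) \<Rightarrow> (nat \<Rightarrow> real) \<Rightarrow> nat \<Rightarrow> (nat \<Rightarrow> 'a::real_normed_vector) \<Rightarrow> real" where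
  "wmean_energy q w n y = wenergy w n (eclass_mean q w n y)"

lemma wenergy_nonneg: "\<forall>j<n. 0 \<le> w j \<Longrightarrow> 0 \<le> wenergy w n y"
  unfolding wenergy_def by (intro sum_nonneg) auto

lemma wenergy_diff:
  fixes y z :: "nat \<Rightarrow> 'a::real_inner"
  shows "wenergy w n (\<lambda>i. y i - z i)
    = wenergy w n y - 2 * (\<Sum>i<n. w i * (y i \<bullet> z i)) + wenergy w n z"
proof -
  have "wenergy w n (\<lambda>i. y i - z i)
      = (\<Sum>i<n. w i * norm (y i)^2 - 2 * (w i * (y i \<bullet> z i)) + w i * norm (z i)^2)"
    unfolding wenergy_def
    by (intro sum.cong refl) (simp add: power2_norm_eq_inner inner_diff inner_commute algebra_simps)
  then show ?thesis by (simp add: wenergy_def sum.distrib sum_subtractf sum_distrib_left)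
qed

context
  fixes q :: "nat \<Rightarrow> nat \<Rightarrow> bool" and n :: nat
  assumes eq: "equiv_below q n"
begin

lemma equiv_below_refl: "i < n \<Longrightarrow> q i i"
  and equiv_below_sym: "q i j \<Longrightarrow> q j i"
  and equiv_below_trans: "q i j \<Longrightarrow> q j k \<Longrightarrow> q i k"
  using eq unfolding equiv_below_def by (auto dest: sympD transpD)

lemma eclass_eq: "q i j \<Longrightarrow> eclass q n i = eclass q n j"
  unfolding eclass_def using equiv_below_sym equiv_below_trans by blast

lemma eclass_mean_eq: "q i j \<Longrightarrow> eclass_mean q w n y i = eclass_mean q w n y j"
  unfolding eclass_mean_def eclass_weight_def by (simp add: eclass_eq)

lemma eclass_weight_pos:
  assumes i: "i < n" and w: "\<forall>j<n. 0 < w j"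
  shows "0 < eclass_weight q w n i"
proof -
  have "w i \<le> eclass_weight q w n i"
    unfolding eclass_weight_def using i w equiv_below_refl[OF i]
    by (intro member_le_sum) (auto simp: eclass_def less_imp_le)
  with w i show ?thesis by fastforce
qed

lemma sum_eclass_eq_sum_if:
  "(\<Sum>j\<in>eclass q n i. g j) = (\<Sum>j<n. if q i j then g j else 0)"
  by (simp add: eclass_def sum.inter_filter[symmetric])

lemma sum_eclass_swap:
  "(\<Sum>i<n. \<Sum>j\<in>eclass q n i. h i j) = (\<Sum>j<n. \<Sum>i\<in>eclass q n j. h i j)"
proof -
  have sym: "q i j = q j i" for i j using equiv_below_sym by blast
  have "(\<Sum>i<n. \<Sum>j<n. if q i j then h i j else 0) = (\<Sum>j<n. \<Sum>i<n. if q j i then h i j else 0)"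
    by (subst sum.swap) (simp add: sym)
  then show ?thesis by (simp only: sum_eclass_eq_sum_if)
qed

text \<open>The class mean is the orthogonal projection onto class-constant fields for the
  weighted inner product.\<close>
lemma sum_eclass_mean_inner:
  fixes y f :: "nat \<Rightarrow> 'a::real_inner"
  assumes w: "\<forall>j<n. 0 < w j" and f: "\<And>i j. q i j \<Longrightarrow> f i = f j"
  shows "(\<Sum>i<n. w i * (eclass_mean q w n y i \<bullet> f i)) = (\<Sum>i<n. w i * (y i \<bullet> f i))"
proof -
  let ?W = "eclass_weight q w n"
  have "(\<Sum>i<n. w i * (eclass_mean q w n y i \<bullet> f i))
      = (\<Sum>i<n. \<Sum>j\<in>eclass q n i. w i * (w j * (y j \<bullet> f j)) / ?W j)"
  proof (rule sum.cong[OF refl])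
    fix i
    have "f j = f i \<and> ?W j = ?W i" if "j \<in> eclass q n i" for j
      using that f eclass_eq[of i j] by (auto simp: eclass_def eclass_weight_def)
    then show "w i * (eclass_mean q w n y i \<bullet> f i)
        = (\<Sum>j\<in>eclass q n i. w i * (w j * (y j \<bullet> f j)) / ?W j)"
      by (auto simp: eclass_mean_def inner_sum_left sum_divide_distrib sum_distrib_left
          intro!: sum.cong)
  qed
  also have "\<dots> = (\<Sum>j<n. \<Sum>i\<in>eclass q n j. w i * (w j * (y j \<bullet> f j)) / ?W j)"
    by (rule sum_eclass_swap)
  also have "\<dots> = (\<Sum>j<n. w j * (y j \<bullet> f j))"
  proof (rule sum.cong[OF refl])
    fix j assume "j \<in> {..<n}"
    then have "?W j \<noteq> 0" using eclass_weight_pos w by (metis lessThan_iff less_irrefl)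
    then show "(\<Sum>i\<in>eclass q n j. w i * (w j * (y j \<bullet> f j)) / ?W j) = w j * (y j \<bullet> f j)"
      by (simp add: sum_divide_distrib[symmetric] sum_distrib_right[symmetric] eclass_weight_def)
  qed
  finally show ?thesis .
qed

lemma wdeviation_eq:
  fixes y :: "nat \<Rightarrow> 'a::real_inner"
  assumes w: "\<forall>j<n. 0 < w j"
  shows "wdeviation q w n y = wenergy w n y - wmean_energy q w n y"
proof -
  have "(\<Sum>i<n. w i * (eclass_mean q w n y i \<bullet> eclass_mean q w n y i))
      = (\<Sum>i<n. w i * (y i \<bullet> eclass_mean q w n y i))"
    by (rule sum_eclass_mean_inner[OF w eclass_mean_eq])
  then show ?thesis
    unfolding wdeviation_def wmean_energy_def wenergy_diff wenergy_def
    by (simp add: power2_norm_eq_inner)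
qed

lemma wmean_energy_le_wenergy:
  fixes y :: "nat \<Rightarrow> 'a::real_inner"
  assumes w: "\<forall>j<n. 0 < w j"
  shows "wmean_energy q w n y \<le> wenergy w n y"
proof -
  have "0 \<le> wenergy w n (\<lambda>i. y i - eclass_mean q w n y i)"
    using w by (intro wenergy_nonneg) (simp add: less_imp_le)
  then show ?thesis using wdeviation_eq[OF w, of y] unfolding wdeviation_def by simp
qed

end

lemma wmean_energy_coarsen:
  fixes y :: "nat \<Rightarrow> 'a::real_inner"
  assumes fine: "equiv_below qf n" and coarse: "equiv_below qc n" and w: "\<forall>j<n. 0 < w j"
    and refines: "\<And>i j. qf i j \<Longrightarrow> qc i j"
  shows "wmean_energy qc w n y \<le> wmean_energy qf w n y"
proof -
  let ?f = "eclass_mean qf w n y" and ?c = "eclass_mean qc w n y"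
  have "(\<Sum>i<n. w i * (?f i \<bullet> ?c i)) = (\<Sum>i<n. w i * (y i \<bullet> ?c i))"
    by (rule sum_eclass_mean_inner[OF fine w eclass_mean_eq[OF coarse refines]])
  also have "\<dots> = (\<Sum>i<n. w i * (?c i \<bullet> ?c i))"
    by (rule sum_eclass_mean_inner[OF coarse w eclass_mean_eq[OF coarse], symmetric])
  finally have "wenergy w n (\<lambda>i. ?f i - ?c i) = wmean_energy qf w n y - wmean_energy qc w n y"
    unfolding wmean_energy_def wenergy_diff by (simp add: wenergy_def power2_norm_eq_inner)
  moreover have "0 \<le> wenergy w n (\<lambda>i. ?f i - ?c i)"
    using w by (intro wenergy_nonneg) (simp add: less_imp_le)
  ultimately show ?thesis by simp
qed

lemma le_nat_ceiling: "real s \<le> A \<Longrightarrow> s \<le> nat \<lceil>A\<rceil>"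
proof -
  assume "real s \<le> A"
  then have "int s \<le> \<lceil>A\<rceil>" by (simp add: le_ceiling_iff)
  then show ?thesis by simp
qed

lemma norm_sum_squared_le: "norm (sum f A)^2 \<le> real (card A) * (\<Sum>j\<in>A. norm (f j)^2)"
proof -
  have "norm (sum f A)^2 \<le> (\<Sum>j\<in>A. norm (f j))^2"
    by (intro power_mono norm_sum) auto
  also have "\<dots> \<le> (\<Sum>j\<in>A. norm (f j)^2) * card A"
    by (rule sum_squared_le_sum_of_squares)
  finally show ?thesis by (simp add: mult.commute)
qed

lemma sum_power_le_geometric:
  fixes q :: real
  assumes "0 \<le> q" "q < 1"
  shows "(\<Sum>k<N. q ^ k) \<le> 1 / (1 - q)"
  using assms by (simp add: sum_gp_strict divide_right_mono)

lemma sum_Suc_mult_power_le: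
  fixes q :: real
  assumes q: "0 \<le> q" "q < 1"
  shows "(\<Sum>k<N. (real k + 1) * q ^ k) \<le> 1 / (1 - q)^2"
proof -
  have closed_form: "(\<Sum>k<N. (real k + 1) * q ^ k)
      = (1 - (real N + 1) * q ^ N + real N * q ^ (N + 1)) / (1 - q)^2" for N
  proof (induction N)
    case (Suc N)
    have "(1 - q)^2 \<noteq> 0" using q by simp
    with Suc show ?case by (simp add: field_simps power2_eq_square)
  qed simp
  have "real N * q ^ (N + 1) = (real N * q) * q ^ N" by simp
  also have "\<dots> \<le> (real N + 1) * q ^ N"
    using q by (intro mult_right_mono) (auto intro: order.trans[OF mult_left_le[of q "real N"]])
  finally show ?thesis
    unfolding closed_form using q by (intro divide_right_mono) auto
qed

lemma norm_diff_le_geometric: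
  fixes y :: "nat \<Rightarrow> 'a::real_normed_vector"
  assumes q: "0 \<le> q" "q < 1" and C: "0 \<le> C" and "\<tau> \<le> T"
    and step: "\<And>u. \<tau> \<le> u \<Longrightarrow> u < T \<Longrightarrow> norm (y (Suc u) - y u) \<le> C * q ^ (u - \<tau>)"
  shows "norm (y T - y \<tau>) \<le> C / (1 - q)"
proof -
  have "norm (y (\<tau> + d) - y \<tau>) \<le> C * (\<Sum>k<d. q ^ k)" if "\<tau> + d \<le> T" for d
    using that
  proof (induction d)
    case (Suc d)
    have "norm (y (\<tau> + Suc d) - y \<tau>) \<le> norm (y (Suc (\<tau> + d)) - y (\<tau> + d)) + norm (y (\<tau> + d) - y \<tau>)"
      using norm_triangle_ineq[of "y (Suc (\<tau> + d)) - y (\<tau> + d)" "y (\<tau> + d) - y \<tau>"] by simp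
    also have "\<dots> \<le> C * q ^ d + C * (\<Sum>k<d. q ^ k)"
      using Suc step[of "\<tau> + d"] by (intro add_mono) auto
    finally show ?case by (simp add: distrib_left)
  qed simp
  from this[of "T - \<tau>"] have "norm (y T - y \<tau>) \<le> C * (\<Sum>k<T - \<tau>. q ^ k)"
    using \<open>\<tau> \<le> T\<close> by simp
  also have "\<dots> \<le> C * (1 / (1 - q))"
    using C q by (intro mult_left_mono sum_power_le_geometric) auto
  finally show ?thesis by simp
qed

lemma norm_diff_average_le:
  fixes y :: "nat \<Rightarrow> 'a::real_normed_vector"
  assumes q: "0 \<le> q" "q < 1" and C: "0 \<le> C" and t: "0 < t"
    and step: "\<And>u. norm (y (Suc u) - y u) \<le> C * q ^ u"
  shows "norm (y t - (1 / real t) *\<^sub>R (\<Sum>s<t. y (Suc s))) \<le> C / (1 - q)^2 / real t"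
proof -
  let ?d = "\<lambda>u. norm (y (Suc u) - y u)"
  have "norm (\<Sum>s<t. y t - y (Suc s)) \<le> (\<Sum>s<t. \<Sum>u\<in>{Suc s..<t}. ?d u)"
  proof (rule order.trans[OF norm_sum sum_mono])
    fix s assume "s \<in> {..<t}"
    then have "y t - y (Suc s) = (\<Sum>u\<in>{Suc s..<t}. y (Suc u) - y u)"
      by (simp add: sum_Suc_diff')
    then show "norm (y t - y (Suc s)) \<le> (\<Sum>u\<in>{Suc s..<t}. ?d u)"
      by (simp only: norm_sum)
  qed
  also have "(\<Sum>s<t. \<Sum>u\<in>{Suc s..<t}. ?d u) = (\<Sum>u<t. real u * ?d u)"
    by (induction t) (simp_all add: sum.distrib)
  also have "\<dots> \<le> (\<Sum>u<t. C * ((real u + 1) * q ^ u))"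
  proof (rule sum_mono)
    fix u
    have "real u * ?d u \<le> real u * (C * q ^ u)" by (intro mult_left_mono step) simp
    also have "\<dots> \<le> C * ((real u + 1) * q ^ u)" using C q by (simp add: algebra_simps)
    finally show "real u * ?d u \<le> C * ((real u + 1) * q ^ u)" .
  qed
  also have "\<dots> \<le> C * (1 / (1 - q)^2)"
    unfolding sum_distrib_left[symmetric] using C q by (intro mult_left_mono sum_Suc_mult_power_le)
  finally have bound: "norm (\<Sum>s<t. y t - y (Suc s)) \<le> C / (1 - q)^2" by simp
  have "y t - (1 / real t) *\<^sub>R (\<Sum>s<t. y (Suc s)) = (1 / real t) *\<^sub>R (\<Sum>s<t. y t - y (Suc s))"
    using t by (simp add: sum_subtractf scaleR_diff_right sum_constant_scaleR del: sum_constant)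
  then show ?thesis using divide_right_mono[OF bound, of "real t"] by simp
qed

lemma drift_lower_bound:
  fixes p w :: "nat \<Rightarrow> 'a::real_normed_vector"
  assumes "s \<le> T" and close: "\<And>u. s \<le> u \<Longrightarrow> u < T \<Longrightarrow> norm (p (Suc u) - p u - z) \<le> \<delta>"
  shows "real (T - s) * (norm z - \<delta>) \<le> norm (p T - p s)"
proof -
  define S where "S = (\<Sum>u\<in>{s..<T}. p (Suc u) - p u - z)"
  have "(\<Sum>u\<in>{s..<T}. p (Suc u) - p u) = p T - p s"
    using sum_Suc_diff'[OF \<open>s \<le> T\<close>, of p] .
  then have "p T - p s = real (T - s) *\<^sub>R z + S"
    unfolding S_def by (simp only: sum_subtractf[of "\<lambda>u. p (Suc u) - p u" "\<lambda>_. z"])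
      (simp add: sum_constant_scaleR del: sum_constant)
  moreover have "norm S \<le> real (T - s) * \<delta>"
    unfolding S_def using close sum_mono[of "{s..<T}" "\<lambda>u. norm (p (Suc u) - p u - z)" "\<lambda>_. \<delta>"]
    by (intro order.trans[OF norm_sum]) auto
  ultimately show ?thesis
    using norm_diff_ineq[of "real (T - s) *\<^sub>R z" S] by (simp add: algebra_simps)
qed

section \<open>The flocking dynamics\<close>

lemma flock_edge_sym: "flock_edge r eps x v t i j = flock_edge r eps x v t j i"
  by (induction t) (auto simp: norm_minus_commute)

lemma flock_edge_irrefl: "\<not> flock_edge r eps x v t i i"
  by (cases t) auto

locale flocking =
  fixes n :: nat and r eps :: real and a :: "nat \<Rightarrow> real" and x v :: "nat \<Rightarrow> nat \<Rightarrow> real^3"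
  assumes system: "flocking_system n r eps a x v" and n_ge_1: "1 \<le> n"
begin

definition rho :: real where "rho = Min (a ` {..<n})"

definition weight :: "nat \<Rightarrow> real" where "weight i = 1 / a i"

definition edge :: "nat \<Rightarrow> nat \<Rightarrow> nat \<Rightarrow> bool" where
  "edge t i j \<longleftrightarrow> i < n \<and> j < n \<and> flock_edge r eps x v t i j"

definition linked :: "nat \<Rightarrow> nat \<Rightarrow> nat \<Rightarrow> bool" where
  "linked t i j \<longleftrightarrow> i < n \<and> j < n \<and> (edge t)\<^sup>*\<^sup>* i j"

definition nbhd :: "nat \<Rightarrow> nat \<Rightarrow> nat set" where
  "nbhd t i = nbrs n r eps x v t i"

definition pull :: "nat \<Rightarrow> nat \<Rightarrow> real^3" where
  "pull t i = (\<Sum>j\<in>nbhd t i. v t j - v t i)"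

definition pull_energy :: "nat \<Rightarrow> real" where
  "pull_energy t = (\<Sum>i<n. a i * norm (pull t i)^2)"

definition dissipation :: "nat \<Rightarrow> real" where
  "dissipation t = (\<Sum>i<n. \<Sum>j\<in>nbhd t i. norm (v t j - v t i)^2)"

definition energy :: "nat \<Rightarrow> real" where
  "energy t = wenergy weight n (v t)"

definition spread :: "nat \<Rightarrow> real" where
  "spread t = wdeviation (linked t) weight n (v t)"

definition mean_energy :: "nat \<Rightarrow> real" where
  "mean_energy t = wmean_energy (linked t) weight n (v t)"

definition vmax :: real where
  "vmax = 1/2 * sqrt (rho / real n)"

lemma a_pos: "i < n \<Longrightarrow> 0 < a i"
  and a_le_inv_degree: "i < n \<Longrightarrow> a i \<le> 1 / (real (card (nbhd t i)) + 1)"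
  and v_Suc: "i < n \<Longrightarrow> v (Suc t) i = v t i + a i *\<^sub>R pull t i"
  and x_Suc: "i < n \<Longrightarrow> x (Suc t) i = x t i + v (Suc t) i"
  and norm_x0_le: "i < n \<Longrightarrow> norm (x 0 i) \<le> 1"
  and norm_v0_le: "i < n \<Longrightarrow> norm (v 0 i) \<le> vmax"
  and r_le_1: "r \<le> 1"
  and eps_pos: "0 < eps"
  and rho_le_half: "rho \<le> 1/2"
  using system unfolding flocking_system_def pull_def nbhd_def vmax_def rho_def by auto

lemma rho_le: "i < n \<Longrightarrow> rho \<le> a i"
  unfolding rho_def by (intro Min_le) auto

lemma rho_pos: "0 < rho"
proof -
  have "rho \<in> a ` {..<n}"
    unfolding rho_def using n_ge_1 by (intro Min_in) (auto simp: lessThan_empty_iff)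
  then show ?thesis using a_pos by auto
qed

lemma weight_pos: "\<forall>j<n. 0 < weight j"
  using a_pos by (simp add: weight_def)

lemma weight_le: "i < n \<Longrightarrow> weight i \<le> 1 / rho"
  unfolding weight_def using rho_le rho_pos a_pos by (simp add: frac_le)

lemma weight_mult_a: "i < n \<Longrightarrow> weight i * a i = 1"
  using a_pos[of i] by (simp add: weight_def)

lemma nbhd_subset: "nbhd t i \<subseteq> {..<n} - {i}"
  unfolding nbhd_def nbrs_def using flock_edge_irrefl by auto

lemma finite_nbhd: "finite (nbhd t i)"
  using nbhd_subset finite_subset by blast

lemma mem_nbhd_iff: "i < n \<Longrightarrow> j \<in> nbhd t i \<longleftrightarrow> edge t i j"
  unfolding nbhd_def nbrs_def edge_def by auto

lemma edge_sym: "edge t i j = edge t j i"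
  unfolding edge_def using flock_edge_sym by blast

lemma edge_lessD: "edge t i j \<Longrightarrow> i < n \<and> j < n"
  unfolding edge_def by simp

lemma a_le_1: "i < n \<Longrightarrow> a i \<le> 1"
  using a_le_inv_degree[of i 0] by (simp add: order_trans[OF _ divide_le_eq_1_pos[THEN iffD2]])

text \<open>The weight bound \<open>a i \<le> 1/(d+1)\<close> together with \<open>d < n\<close> keeps
  every update a strict convex combination.\<close>
lemma a_mult_degree_le: "i < n \<Longrightarrow> a i * real (card (nbhd t i)) \<le> 1 - 1 / real n"
proof -
  assume i: "i < n"
  let ?d = "real (card (nbhd t i))"
  have "card (nbhd t i) \<le> card ({..<n} - {i})"
    using nbhd_subset by (intro card_mono) auto
  then have d: "?d + 1 \<le> real n" using i by simp
  have "a i * ?d \<le> ?d / (?d + 1)"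
    using mult_right_mono[OF a_le_inv_degree[OF i], of ?d] by simp
  also have "\<dots> = 1 - 1 / (?d + 1)" by (simp add: field_simps)
  also have "\<dots> \<le> 1 - 1 / real n"
    using d by (simp add: frac_le)
  finally show ?thesis .
qed

lemma sum_nbhd_swap:
  assumes C: "C \<subseteq> {..<n}" and closed: "\<And>j k. j \<in> C \<Longrightarrow> edge t j k \<Longrightarrow> k \<in> C"
  shows "(\<Sum>j\<in>C. \<Sum>k\<in>nbhd t j. F j k) = (\<Sum>j\<in>C. \<Sum>k\<in>nbhd t j. F k j)"
proof -
  have fin: "finite C" using C finite_subset by blast
  have as_if: "(\<Sum>k\<in>nbhd t j. H k) = (\<Sum>k\<in>C. if edge t j k then H k else 0)"
    if "j \<in> C" for j and H :: "nat \<Rightarrow> 'b::comm_monoid_add"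
  proof -
    have "nbhd t j = {k\<in>C. edge t j k}"
      using mem_nbhd_iff[of j] closed[OF that] that C by auto
    then show ?thesis using sum.inter_filter[OF fin, of H "edge t j"] by simp
  qed
  have "(\<Sum>j\<in>C. \<Sum>k\<in>C. if edge t j k then F j k else 0)
      = (\<Sum>j\<in>C. \<Sum>k\<in>C. if edge t j k then F k j else 0)"
    by (subst sum.swap) (simp add: edge_sym)
  then show ?thesis by (simp add: as_if)
qed

lemma sum_nbhd_all_swap: "(\<Sum>i<n. \<Sum>j\<in>nbhd t i. F i j) = (\<Sum>i<n. \<Sum>j\<in>nbhd t i. F j i)"
  by (rule sum_nbhd_swap) (auto dest: edge_lessD)

lemma dissipation_nonneg: "0 \<le> dissipation t"
  unfolding dissipation_def by (intro sum_nonneg) auto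

lemma pull_energy_le: "pull_energy t \<le> (1 - 1 / real n) * dissipation t"
proof -
  have "a i * norm (pull t i)^2 \<le> (1 - 1 / real n) * (\<Sum>j\<in>nbhd t i. norm (v t j - v t i)^2)"
    if i: "i < n" for i
  proof -
    have "a i * norm (pull t i)^2
        \<le> a i * (real (card (nbhd t i)) * (\<Sum>j\<in>nbhd t i. norm (v t j - v t i)^2))"
      unfolding pull_def using a_pos[OF i] by (intro mult_left_mono norm_sum_squared_le) auto
    also have "\<dots> \<le> (1 - 1 / real n) * (\<Sum>j\<in>nbhd t i. norm (v t j - v t i)^2)"
      using a_mult_degree_le[OF i] by (simp add: mult.assoc[symmetric] mult_right_mono sum_nonneg)
    finally show ?thesis .
  qed
  then show ?thesis
    unfolding pull_energy_def dissipation_def sum_distrib_left by (intro sum_mono) simp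
qed

lemma sum_inner_pull: "(\<Sum>i<n. v t i \<bullet> pull t i) = - dissipation t / 2"
proof -
  let ?F = "\<lambda>i j. v t i \<bullet> (v t j - v t i)"
  have "2 * (\<Sum>i<n. v t i \<bullet> pull t i)
      = (\<Sum>i<n. \<Sum>j\<in>nbhd t i. ?F i j) + (\<Sum>i<n. \<Sum>j\<in>nbhd t i. ?F j i)"
    using sum_nbhd_all_swap[of ?F t] by (simp add: pull_def inner_sum_right)
  also have "\<dots> = - dissipation t"
    unfolding dissipation_def sum.distrib[symmetric] sum_negf[symmetric]
    by (intro sum.cong refl) (simp add: power2_norm_eq_inner inner_diff algebra_simps inner_commute)
  finally show ?thesis by simp
qed

lemma energy_Suc: "energy (Suc t) = energy t - dissipation t + pull_energy t"
proof -
  have "weight i * norm (v (Suc t) i)^2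
      = weight i * norm (v t i)^2 + 2 * (v t i \<bullet> pull t i) + a i * norm (pull t i)^2"
    if i: "i < n" for i
  proof -
    have "weight i * norm (v (Suc t) i)^2
        = weight i * norm (v t i)^2 + 2 * ((weight i * a i) * (v t i \<bullet> pull t i))
          + (weight i * a i) * a i * norm (pull t i)^2"
      unfolding v_Suc[OF i] by (simp add: power2_norm_eq_inner inner_add algebra_simps inner_commute)
    then show ?thesis by (simp add: weight_mult_a[OF i])
  qed
  then have "energy (Suc t) = energy t + 2 * (\<Sum>i<n. v t i \<bullet> pull t i) + pull_energy t"
    unfolding energy_def wenergy_def pull_energy_def sum_distrib_left sum.distrib[symmetric]
    by (intro sum.cong) auto
  then show ?thesis using sum_inner_pull[of t] by simp
qed

lemma energy_decrease: "dissipation t / real n \<le> energy t - energy (Suc t)"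
  using energy_Suc[of t] pull_energy_le[of t] by (simp add: algebra_simps)

lemma energy_Suc_le: "energy (Suc t) \<le> energy t"
  using energy_decrease[of t] divide_nonneg_nonneg[OF dissipation_nonneg[of t], of "real n"]
  by simp

lemma norm_v_step_sq_le: "i < n \<Longrightarrow> norm (v (Suc t) i - v t i)^2 \<le> dissipation t"
proof -
  assume i: "i < n"
  have "norm (v (Suc t) i - v t i)^2 = a i * (a i * norm (pull t i)^2)"
    unfolding v_Suc[OF i] using a_pos[OF i] by (simp add: power2_eq_square)
  also have "\<dots> \<le> a i * norm (pull t i)^2"
    using a_le_1[OF i] a_pos[OF i] by (intro mult_left_le_one_le) auto
  also have "\<dots> \<le> pull_energy t"
    unfolding pull_energy_def using i a_pos
    by (intro member_le_sum mult_nonneg_nonneg) (auto intro: less_imp_le)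
  also have "\<dots> \<le> dissipation t"
    using pull_energy_le[of t] divide_nonneg_nonneg[OF dissipation_nonneg[of t], of "real n"]
    by (simp add: algebra_simps)
  finally show ?thesis .
qed

lemma edge_rtranclp_sym: "(edge t)\<^sup>*\<^sup>* i j \<Longrightarrow> (edge t)\<^sup>*\<^sup>* j i"
proof (induction rule: rtranclp_induct)
  case (step y z)
  then show ?case by (metis converse_rtranclp_into_rtranclp edge_sym)
qed simp

lemma equiv_below_linked: "equiv_below (linked t) n"
  unfolding equiv_below_def linked_def symp_def transp_def
  using edge_rtranclp_sym by (auto intro: rtranclp_trans)

lemma edge_imp_linked: "edge t i j \<Longrightarrow> linked t i j"
  unfolding linked_def using edge_lessD by auto

lemma eclass_linked_closed: "j \<in> eclass (linked t) n i \<Longrightarrow> edge t j k \<Longrightarrow> k \<in> eclass (linked t) n i"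
  using equiv_below_trans[OF equiv_below_linked] edge_imp_linked edge_lessD
  unfolding eclass_def by blast

lemma sum_pull_eq_0:
  assumes C: "C \<subseteq> {..<n}" and closed: "\<And>j k. j \<in> C \<Longrightarrow> edge t j k \<Longrightarrow> k \<in> C"
  shows "(\<Sum>j\<in>C. pull t j) = 0"
proof -
  have "(\<Sum>j\<in>C. pull t j) = (\<Sum>j\<in>C. \<Sum>k\<in>nbhd t j. v t j - v t k)"
    unfolding pull_def by (rule sum_nbhd_swap[OF C closed])
  also have "\<dots> = - (\<Sum>j\<in>C. pull t j)"
    unfolding pull_def by (simp add: sum_negf[symmetric])
  finally have "(2::real) *\<^sub>R (\<Sum>j\<in>C. pull t j) = 0"
    by (metis scaleR_2 add.right_inverse)
  then show ?thesis by simp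
qed

text \<open>Velocity updates only exchange momentum along edges, so each flock of \<open>G t\<close>
  keeps its weighted mean velocity.\<close>
lemma eclass_mean_v_Suc: "eclass_mean (linked t) weight n (v (Suc t)) = eclass_mean (linked t) weight n (v t)"
proof
  fix i
  let ?C = "eclass (linked t) n i"
  have "(\<Sum>j\<in>?C. weight j *\<^sub>R v (Suc t) j) = (\<Sum>j\<in>?C. weight j *\<^sub>R v t j + pull t j)"
    by (intro sum.cong refl) (simp add: eclass_def v_Suc scaleR_add_right weight_mult_a)
  also have "\<dots> = (\<Sum>j\<in>?C. weight j *\<^sub>R v t j)"
    using sum_pull_eq_0[OF _ eclass_linked_closed] by (simp add: sum.distrib eclass_def subset_eq)
  finally show "eclass_mean (linked t) weight n (v (Suc t)) i = eclass_mean (linked t) weight n (v t) i"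
    unfolding eclass_mean_def by simp
qed

lemma spread_eq: "spread t = energy t - mean_energy t"
  unfolding spread_def energy_def mean_energy_def by (rule wdeviation_eq[OF equiv_below_linked weight_pos])

lemma spread_nonneg: "0 \<le> spread t"
  unfolding spread_def wdeviation_def using weight_pos by (intro wenergy_nonneg) (simp add: less_imp_le)

lemma mean_energy_nonneg: "0 \<le> mean_energy t"
  unfolding mean_energy_def wmean_energy_def using weight_pos by (intro wenergy_nonneg) (simp add: less_imp_le)

lemma energy_nonneg: "0 \<le> energy t"
  unfolding energy_def using weight_pos by (intro wenergy_nonneg) (simp add: less_imp_le)

lemma energy_decrease_le_spread: "energy t - energy (Suc t) \<le> spread t"
  using wmean_energy_le_wenergy[OF equiv_below_linked weight_pos, of t "v (Suc t)"] spread_eq[of t]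
  unfolding wmean_energy_def eclass_mean_v_Suc
  by (simp add: energy_def mean_energy_def wmean_energy_def)

definition no_new_edge :: "nat \<Rightarrow> bool" where
  "no_new_edge t \<longleftrightarrow> (\<forall>i j. edge (Suc t) i j \<longrightarrow> edge t i j)"

text \<open>Without new edges the flocks can only split, which raises the mean energy, so the
  spread loses at least the dissipated energy.\<close>
lemma spread_Suc_le:
  assumes "no_new_edge t"
  shows "spread (Suc t) \<le> spread t - (energy t - energy (Suc t))"
proof -
  have "linked (Suc t) i j \<Longrightarrow> linked t i j" for i j
    using assms unfolding linked_def no_new_edge_def by (metis mono_rtranclp)
  then have "wmean_energy (linked t) weight n (v (Suc t)) \<le> mean_energy (Suc t)"
    unfolding mean_energy_def by (rule wmean_energy_coarsen[OF equiv_below_linked equiv_below_linked weight_pos])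
  then show ?thesis
    using spread_eq[of t] spread_eq[of "Suc t"]
    unfolding wmean_energy_def eclass_mean_v_Suc by (simp add: mean_energy_def wmean_energy_def)
qed

lemma norm_v_edge_le: "edge t p q \<Longrightarrow> norm (v t q - v t p) \<le> sqrt (dissipation t)"
proof (rule real_le_rsqrt)
  assume e: "edge t p q"
  then have p: "p < n" and q: "q \<in> nbhd t p" using edge_lessD mem_nbhd_iff by auto
  have "norm (v t q - v t p)^2 \<le> (\<Sum>k\<in>nbhd t p. norm (v t k - v t p)^2)"
    using q finite_nbhd by (intro member_le_sum) auto
  also have "\<dots> \<le> dissipation t"
    unfolding dissipation_def using p by (intro member_le_sum sum_nonneg) auto
  finally show "norm (v t q - v t p)^2 \<le> dissipation t" .
qed

lemma norm_v_path_le: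
  "(p, q) \<in> {(i, j). edge t i j} ^^ k \<Longrightarrow> norm (v t q - v t p) \<le> real k * sqrt (dissipation t)"
proof (induction k arbitrary: q)
  case (Suc k)
  then obtain y where py: "(p, y) \<in> {(i, j). edge t i j} ^^ k" and yq: "edge t y q"
    by auto
  have "norm (v t q - v t p) \<le> norm (v t q - v t y) + norm (v t y - v t p)"
    using norm_triangle_ineq[of "v t q - v t y" "v t y - v t p"] by simp
  also have "\<dots> \<le> sqrt (dissipation t) + real k * sqrt (dissipation t)"
    using norm_v_edge_le[OF yq] Suc.IH[OF py] by (rule add_mono)
  finally show ?case by (simp add: algebra_simps)
qed simp

lemma norm_v_linked_le: "linked t i j \<Longrightarrow> norm (v t j - v t i) \<le> real n ^ 2 * sqrt (dissipation t)"
proof -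
  assume "linked t i j"
  let ?E = "{(i, j). edge t i j}"
  have sub: "?E \<subseteq> {..<n} \<times> {..<n}" using edge_lessD by auto
  then have fin: "finite ?E" by (rule finite_subset) simp
  have "(i, j) \<in> ?E\<^sup>*"
    using \<open>linked t i j\<close> unfolding linked_def rtranclp_rtrancl_eq by simp
  then obtain k where "k \<le> card ?E" and k: "(i, j) \<in> ?E ^^ k"
    unfolding rtrancl_finite_eq_relpow[OF fin] by blast
  moreover have "card ?E \<le> n * n" using card_mono[OF _ sub] by simp
  ultimately have "real k \<le> real n ^ 2" by (simp add: power2_eq_square flip: of_nat_mult)
  then show ?thesis
    using norm_v_path_le[OF k] dissipation_nonneg[of t] by (meson mult_right_mono order_trans real_sqrt_ge_zero)
qed

lemma norm_v_minus_mean_le: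
  assumes i: "i < n"
  shows "norm (v t i - eclass_mean (linked t) weight n (v t) i) \<le> real n ^ 2 * sqrt (dissipation t)"
proof -
  let ?C = "eclass (linked t) n i" and ?P = "eclass_weight (linked t) weight n i"
    and ?B = "real n ^ 2 * sqrt (dissipation t)"
  have P: "0 < ?P" by (rule eclass_weight_pos[OF equiv_below_linked i weight_pos])
  have "v t i - eclass_mean (linked t) weight n (v t) i
      = (1 / ?P) *\<^sub>R (?P *\<^sub>R v t i - (\<Sum>j\<in>?C. weight j *\<^sub>R v t j))"
    unfolding eclass_mean_def using P by (simp add: scaleR_diff_right)
  also have "?P *\<^sub>R v t i - (\<Sum>j\<in>?C. weight j *\<^sub>R v t j) = (\<Sum>j\<in>?C. weight j *\<^sub>R (v t i - v t j))"
    unfolding eclass_weight_def by (simp add: scaleR_sum_left scaleR_diff_right sum_subtractf)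
  finally have "v t i - eclass_mean (linked t) weight n (v t) i
      = (1 / ?P) *\<^sub>R (\<Sum>j\<in>?C. weight j *\<^sub>R (v t i - v t j))" .
  moreover have "norm (\<Sum>j\<in>?C. weight j *\<^sub>R (v t i - v t j)) \<le> (\<Sum>j\<in>?C. weight j * ?B)"
  proof (rule order.trans[OF norm_sum sum_mono])
    fix j assume "j \<in> ?C"
    then have "norm (v t i - v t j) \<le> ?B" and "0 < weight j"
      using norm_v_linked_le weight_pos by (auto simp: eclass_def norm_minus_commute)
    then show "norm (weight j *\<^sub>R (v t i - v t j)) \<le> weight j * ?B"
      by (simp add: mult_left_mono)
  qed
  moreover have "(\<Sum>j\<in>?C. weight j * ?B) = ?P * ?B"
    by (simp add: eclass_weight_def sum_distrib_right)
  ultimately show ?thesis using P by (simp add: divide_le_eq mult.commute)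
qed

lemma spread_le_dissipation: "spread t \<le> real n ^ 5 / rho * dissipation t"
proof -
  have "weight i * norm (v t i - eclass_mean (linked t) weight n (v t) i)^2
      \<le> (1 / rho) * (real n ^ 4 * dissipation t)" if i: "i < n" for i
  proof (rule mult_mono)
    have "norm (v t i - eclass_mean (linked t) weight n (v t) i)^2 \<le> (real n ^ 2 * sqrt (dissipation t))^2"
      using norm_v_minus_mean_le[OF i] by (intro power_mono) auto
    then show "norm (v t i - eclass_mean (linked t) weight n (v t) i)^2 \<le> real n ^ 4 * dissipation t"
      using dissipation_nonneg[of t] by (simp add: power_mult_distrib)
  qed (use weight_le weight_pos i rho_pos in auto)
  then have "spread t \<le> (\<Sum>i<n. (1 / rho) * (real n ^ 4 * dissipation t))"
    unfolding spread_def wdeviation_def wenergy_def by (intro sum_mono) simp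
  also have "\<dots> = real n ^ 5 / rho * dissipation t"
    by (simp add: power_Suc[of "real n" 4, simplified])
  finally show ?thesis .
qed

lemma energy_le_energy_0: "energy t \<le> energy 0"
  by (induction t) (use energy_Suc_le order_trans in blast)+

lemma vmax_le: "vmax \<le> 1/2"
  using rho_le_half rho_pos n_ge_1 by (simp add: vmax_def divide_le_eq)

lemma energy_0_le: "energy 0 \<le> 1/4"
proof -
  have "weight i * norm (v 0 i)^2 \<le> (1 / rho) * (rho / (4 * real n))" if i: "i < n" for i
  proof (rule mult_mono)
    have "norm (v 0 i)^2 \<le> vmax^2" using norm_v0_le[OF i] by (intro power_mono) auto
    then show "norm (v 0 i)^2 \<le> rho / (4 * real n)"
      unfolding vmax_def using rho_pos n_ge_1 by (simp add: power_mult_distrib power_divide)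
  qed (use weight_le weight_pos i rho_pos in auto)
  then have "energy 0 \<le> (\<Sum>i<n. (1 / rho) * (rho / (4 * real n)))"
    unfolding energy_def wenergy_def by (intro sum_mono) simp
  also have "\<dots> = 1/4" using rho_pos n_ge_1 by simp
  finally show ?thesis .
qed

lemma spread_le: "spread t \<le> 1/4"
  using spread_eq[of t] mean_energy_nonneg[of t] energy_le_energy_0[of t] energy_0_le by linarith

text \<open>Each update is a convex combination of current velocities, so the ball of radius
  \<open>vmax\<close> is invariant.\<close>
lemma norm_v_le: "i < n \<Longrightarrow> norm (v t i) \<le> vmax"
proof (induction t arbitrary: i)
  case 0
  then show ?case using norm_v0_le by simp
next
  case (Suc t)
  let ?d = "real (card (nbhd t i))"
  have i: "i < n" by fact
  have c: "0 \<le> 1 - a i * ?d"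
    using a_mult_degree_le[OF i, of t] by (smt (verit) divide_nonneg_nonneg of_nat_0_le_iff)
  have "v (Suc t) i = (1 - a i * ?d) *\<^sub>R v t i + a i *\<^sub>R (\<Sum>j\<in>nbhd t i. v t j)"
    unfolding v_Suc[OF i] pull_def sum_subtractf
    by (simp add: sum_constant_scaleR scaleR_diff_right scaleR_diff_left del: sum_constant)
  also have "norm \<dots> \<le> (1 - a i * ?d) * vmax + a i * (?d * vmax)"
  proof (rule order.trans[OF norm_triangle_ineq add_mono])
    show "norm ((1 - a i * ?d) *\<^sub>R v t i) \<le> (1 - a i * ?d) * vmax"
      using c Suc.IH[OF i] by (simp add: mult_left_mono)
    have "norm (\<Sum>j\<in>nbhd t i. v t j) \<le> (\<Sum>j\<in>nbhd t i. vmax)"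
      using nbhd_subset Suc.IH by (intro order.trans[OF norm_sum sum_mono]) auto
    then show "norm (a i *\<^sub>R (\<Sum>j\<in>nbhd t i. v t j)) \<le> a i * (?d * vmax)"
      using a_pos[OF i] by (simp add: mult_left_mono)
  qed
  also have "\<dots> = vmax" by (simp add: algebra_simps)
  finally show ?case .
qed

lemma x_eq_sum: "i < n \<Longrightarrow> x t i = x 0 i + (\<Sum>s<t. v (Suc s) i)"
  by (induction t) (simp_all add: x_Suc)

lemma norm_x_le: "i < n \<Longrightarrow> norm (x t i) \<le> 1 + real t / 2"
proof -
  assume i: "i < n"
  have "norm (\<Sum>s<t. v (Suc s) i) \<le> (\<Sum>s<t. 1/2)"
    using norm_v_le[OF i] vmax_le by (intro order.trans[OF norm_sum sum_mono]) (blast intro: order_trans)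
  moreover have "norm (x t i) \<le> norm (x 0 i) + norm (\<Sum>s<t. v (Suc s) i)"
    unfolding x_eq_sum[OF i, of t] by (rule norm_triangle_ineq)
  ultimately show ?thesis using norm_x0_le[OF i] by simp
qed

lemma ex_large_velocity_diff: "edge s p q \<Longrightarrow> \<exists>s' i j. i < n \<and> j < n \<and> eps < norm (v s' i - v s' j)"
proof (induction s)
  case 0
  then show ?case unfolding edge_def by auto
next
  case (Suc s)
  then show ?case unfolding edge_def by (cases "flock_edge r eps x v s p q") auto
qed

text \<open>A first edge needs a velocity gap \<open>eps\<close>, but all velocities lie in the ball of
  radius \<open>vmax = sqrt (rho / n) / 2\<close>.\<close>
lemma edge_imp_eps_small:
  assumes "edge s p q"
  shows "real n * eps^2 \<le> 1" and "eps^2 \<le> rho"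
proof -
  obtain s' i j where ij: "i < n" "j < n" and gap: "eps < norm (v s' i - v s' j)"
    using ex_large_velocity_diff[OF assms] by blast
  have "norm (v s' i - v s' j) \<le> 2 * vmax"
    using norm_v_le[OF ij(1), of s'] norm_v_le[OF ij(2), of s'] norm_triangle_ineq4[of "v s' i" "v s' j"]
    by linarith
  then have "eps < sqrt (rho / real n)" using gap by (simp add: vmax_def)
  then have "eps^2 < (sqrt (rho / real n))^2"
    using eps_pos by (intro power_strict_mono) auto
  then have "eps^2 < rho / real n"
    using rho_pos by simp
  moreover have "rho / real n \<le> rho" using rho_pos n_ge_1 by (simp add: divide_le_eq)
  ultimately show "eps^2 \<le> rho" by simp
  show "real n * eps^2 \<le> 1"
    using \<open>eps^2 < rho / real n\<close> rho_le_half n_ge_1 by (simp add: field_simps)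
qed

lemma v_const_if_no_edge:
  assumes "\<forall>s p q. \<not> edge s p q" and i: "i < n"
  shows "v s i = v 0 i"
proof (induction s)
  case (Suc s)
  have "nbhd s i = {}" using mem_nbhd_iff[OF i] assms by blast
  then show ?case using v_Suc[OF i, of s] Suc by (simp add: pull_def)
qed simp

end

section \<open>Convergence once edges can form\<close>

definition rate :: "real \<Rightarrow> real" where
  "rate eps = sqrt (1 - eps ^ 14)"

definition settle_steps :: "real \<Rightarrow> nat" where
  "settle_steps eps = (LEAST L. rate eps ^ L \<le> eps^2 * (1 - rate eps) / 2)"

text \<open>The deadline for the next new edge after a quiet start \<open>s\<close>, read off from the
  proof of \<open>new_edge_before_horizon\<close>.\<close>
definition horizon :: "real \<Rightarrow> nat \<Rightarrow> nat" where
  "horizon eps s = nat \<lceil>real (s + settle_steps eps) + 2 * (3 + real (s + settle_steps eps)) / eps\<rceil> + 1"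

definition max_new_edges :: "real \<Rightarrow> nat" where
  "max_new_edges eps = nat \<lceil>1 / (4 * eps ^ 4)\<rceil>"

definition quiet_time :: "real \<Rightarrow> nat" where
  "quiet_time eps = (horizon eps ^^ Suc (max_new_edges eps)) 0"

text \<open>Before \<open>quiet_time\<close> velocity increments are at most \<open>1\<close>, afterwards at most
  \<open>rate^(u - quiet_time) / (2 * eps)\<close>.\<close>
definition step_const :: "real \<Rightarrow> real" where
  "step_const eps = max 1 (1 / (2 * eps)) / rate eps ^ quiet_time eps"

context
  fixes eps :: real
  assumes eps: "0 < eps" "eps < 1"
begin

lemma rate_pos: "0 < rate eps" and rate_lt_1: "rate eps < 1"
proof -
  have "0 < eps ^ 14" "eps ^ 14 < 1" using eps by (simp_all add: power_less_one_iff)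
  then show "0 < rate eps" "rate eps < 1" unfolding rate_def by auto
qed

lemma less_horizon: "s < horizon eps s"
proof -
  have "real s \<le> real (s + settle_steps eps) + 2 * (3 + real (s + settle_steps eps)) / eps"
    using eps by simp
  then have "s \<le> nat \<lceil>real (s + settle_steps eps) + 2 * (3 + real (s + settle_steps eps)) / eps\<rceil>"
    by (rule le_nat_ceiling)
  then show ?thesis unfolding horizon_def by simp
qed

lemma rate_pow_settle_steps: "rate eps ^ settle_steps eps \<le> eps^2 * (1 - rate eps) / 2"
proof -
  have lim: "(\<lambda>k. rate eps ^ k) \<longlonglongrightarrow> 0"
    using rate_pos rate_lt_1 by (intro LIMSEQ_power_zero) simp
  have pos: "0 < eps^2 * (1 - rate eps) / 2" using eps rate_lt_1 by simp
  obtain N where "\<forall>k\<ge>N. rate eps ^ k < eps^2 * (1 - rate eps) / 2"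
    using order_tendstoD(2)[OF lim pos] unfolding eventually_sequentially by blast
  then have "rate eps ^ N \<le> eps^2 * (1 - rate eps) / 2" by (blast intro: less_imp_le)
  then show ?thesis unfolding settle_steps_def by (rule LeastI)
qed

end

text \<open>The regime in which edges can form at all (see \<open>edge_imp_eps_small\<close>). There the
  relaxation rate \<open>rho / n^6\<close> of the spread is bounded below in terms of \<open>eps\<close> alone.\<close>
locale active_flocking = flocking +
  assumes n_eps_sq_le: "real n * eps^2 \<le> 1" and eps_sq_le_rho: "eps^2 \<le> rho"
begin

lemma eps_lt_1: "eps < 1"
proof -
  have "eps^2 < 1" using eps_sq_le_rho rho_le_half by simp
  then show ?thesis by (metis not_less one_le_power)
qed

lemma sqrt_n_le: "sqrt (real n) \<le> 1 / eps"
proof -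
  have "real n \<le> (1 / eps)^2" using n_eps_sq_le eps_pos by (simp add: field_simps)
  then show ?thesis using real_sqrt_le_mono eps_pos by fastforce
qed

lemma eps_pow_14_le: "eps ^ 14 \<le> rho / real n ^ 6"
proof -
  have "eps ^ 14 * real n ^ 6 = eps^2 * (real n * eps^2) ^ 6"
    by (simp add: power_mult_distrib flip: power_mult power_add)
  also have "\<dots> \<le> eps^2" using n_eps_sq_le eps_pos by (simp add: mult_left_le power_le_one)
  also have "\<dots> \<le> rho" by (rule eps_sq_le_rho)
  finally show ?thesis using n_ge_1 by (simp add: field_simps)
qed

lemma spread_Suc_le_contract:
  assumes "no_new_edge t"
  shows "spread (Suc t) \<le> (1 - eps ^ 14) * spread t"
proof -
  have "eps ^ 14 * spread t \<le> rho / real n ^ 6 * spread t"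
    using eps_pow_14_le spread_nonneg by (rule mult_right_mono)
  also have "\<dots> = (rho / real n ^ 5 * spread t) / real n"
    by (simp add: power_Suc[of "real n" 5, simplified] field_simps)
  also have "\<dots> \<le> dissipation t / real n"
    using spread_le_dissipation[of t] rho_pos n_ge_1
    by (intro divide_right_mono) (auto simp: field_simps)
  also have "\<dots> \<le> spread t - spread (Suc t)"
    using energy_decrease[of t] spread_Suc_le[OF assms] by linarith
  finally show ?thesis by (simp add: algebra_simps)
qed

lemma spread_le_power:
  "(\<And>u. s \<le> u \<Longrightarrow> u < s + k \<Longrightarrow> no_new_edge u) \<Longrightarrow> spread (s + k) \<le> (1 - eps ^ 14) ^ k / 4"
proof (induction k)
  case 0
  then show ?case using spread_le by simp
next
  case (Suc k)
  have "spread (s + Suc k) \<le> (1 - eps ^ 14) * spread (s + k)"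
    using Suc.prems by (simp add: spread_Suc_le_contract)
  also have "\<dots> \<le> (1 - eps ^ 14) * ((1 - eps ^ 14) ^ k / 4)"
    using Suc eps_pos eps_lt_1 by (intro mult_left_mono) (auto simp: power_le_one)
  finally show ?case by simp
qed

lemma norm_v_step_le_spread: "i < n \<Longrightarrow> norm (v (Suc u) i - v u i) \<le> sqrt (real n * spread u)"
proof (rule real_le_rsqrt)
  assume i: "i < n"
  have "dissipation u \<le> real n * (energy u - energy (Suc u))"
    using energy_decrease[of u] n_ge_1 by (simp add: field_simps)
  also have "\<dots> \<le> real n * spread u"
    using energy_decrease_le_spread by (simp add: mult_left_mono)
  finally have "dissipation u \<le> real n * spread u" .
  then show "norm (v (Suc u) i - v u i)^2 \<le> real n * spread u"
    using norm_v_step_sq_le[OF i, of u] by linarith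
qed

lemma norm_v_step_le_rate:
  assumes quiet: "\<And>u'. s \<le> u' \<Longrightarrow> u' < u \<Longrightarrow> no_new_edge u'" and i: "i < n" and "s \<le> u"
  shows "norm (v (Suc u) i - v u i) \<le> rate eps ^ (u - s) / (2 * eps)"
proof -
  have "spread u \<le> (1 - eps ^ 14) ^ (u - s) / 4"
    using spread_le_power[of s "u - s"] quiet \<open>s \<le> u\<close> by simp
  then have "norm (v (Suc u) i - v u i) \<le> sqrt (real n * ((1 - eps ^ 14) ^ (u - s) / 4))"
    by (intro order.trans[OF norm_v_step_le_spread[OF i]] real_sqrt_le_mono mult_left_mono) auto
  also have "\<dots> = sqrt (real n) * rate eps ^ (u - s) / 2"
    unfolding rate_def by (simp add: real_sqrt_mult real_sqrt_divide real_sqrt_power)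
  also have "\<dots> \<le> (1 / eps) * rate eps ^ (u - s) / 2"
    using sqrt_n_le rate_pos[OF eps_pos eps_lt_1] by (intro divide_right_mono mult_right_mono) auto
  finally show ?thesis by simp
qed

lemma norm_v_diff_le_rate:
  assumes quiet: "\<And>u. s \<le> u \<Longrightarrow> u < t \<Longrightarrow> no_new_edge u" and i: "i < n" and "s \<le> \<tau>" "\<tau> \<le> Suc t"
  shows "norm (v (Suc t) i - v \<tau> i) \<le> rate eps ^ (\<tau> - s) / (2 * eps * (1 - rate eps))"
proof -
  have q: "0 < rate eps" "rate eps < 1" using rate_pos rate_lt_1 eps_pos eps_lt_1 by auto
  have "norm (v (Suc t) i - v \<tau> i) \<le> rate eps ^ (\<tau> - s) / (2 * eps) / (1 - rate eps)"
  proof (rule norm_diff_le_geometric[where q = "rate eps"])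
    fix u assume u: "\<tau> \<le> u" "u < Suc t"
    have "rate eps ^ (u - s) = rate eps ^ (\<tau> - s) * rate eps ^ (u - \<tau>)"
      using u \<open>s \<le> \<tau>\<close> by (simp flip: power_add)
    then show "norm (v (Suc u) i - v u i) \<le> rate eps ^ (\<tau> - s) / (2 * eps) * rate eps ^ (u - \<tau>)"
      using norm_v_step_le_rate[of s u i] quiet i u \<open>s \<le> \<tau>\<close> by simp
  qed (use q eps_pos \<open>\<tau> \<le> Suc t\<close> in auto)
  then show ?thesis by (simp add: field_simps)
qed

lemma new_edge_witness:
  assumes "\<not> no_new_edge t"
  obtains i j where "i < n" "j < n" "edge (Suc t) i j"
    "norm (x (Suc t) i - x (Suc t) j) \<le> r" "eps < norm (v (Suc t) i - v (Suc t) j)"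
  using assms unfolding no_new_edge_def edge_def by auto

lemma new_edge_dissipation: "\<not> no_new_edge t \<Longrightarrow> eps^2 < dissipation (Suc t)"
proof -
  assume "\<not> no_new_edge t"
  then obtain i j where e: "edge (Suc t) i j" and gap: "eps < norm (v (Suc t) i - v (Suc t) j)"
    by (rule new_edge_witness)
  have "eps < sqrt (dissipation (Suc t))"
    using norm_v_edge_le[OF e] gap by (simp add: norm_minus_commute)
  then have "eps^2 < (sqrt (dissipation (Suc t)))^2"
    using eps_pos by (intro power_strict_mono) auto
  then show ?thesis using dissipation_nonneg by simp
qed

text \<open>Each new edge dissipates at least \<open>eps^4\<close> of the energy, which starts below \<open>1/4\<close>.\<close>
lemma card_new_edges_le:
  assumes fin: "finite F" and new: "\<And>u. u \<in> F \<Longrightarrow> \<not> no_new_edge u"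
  shows "real (card F) * eps^4 \<le> 1/4"
proof -
  let ?drop = "\<lambda>u. energy u - energy (Suc u)"
  have drop: "eps^4 \<le> ?drop (Suc u)" if "u \<in> F" for u
  proof -
    have "eps^2 \<le> 1 / real n" using n_eps_sq_le n_ge_1 by (simp add: field_simps)
    then have "eps^2 * eps^2 \<le> dissipation (Suc u) * (1 / real n)"
      using new_edge_dissipation[OF new[OF that]] dissipation_nonneg by (intro mult_mono) auto
    also have "\<dots> \<le> ?drop (Suc u)" using energy_decrease[of "Suc u"] by simp
    finally show ?thesis by (simp flip: power_add)
  qed
  obtain M where M: "F \<subseteq> {..<M}" using fin finite_nat_bounded by blast
  have "real (card F) * eps^4 \<le> (\<Sum>u\<in>F. ?drop (Suc u))"
    using sum_mono[of F "\<lambda>_. eps^4", OF drop] by simp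
  also have "\<dots> = (\<Sum>u\<in>Suc ` F. ?drop u)" by (simp add: sum.reindex)
  also have "\<dots> \<le> (\<Sum>u<Suc M. ?drop u)"
    using M energy_Suc_le by (intro sum_mono2) auto
  also have "\<dots> = energy 0 - energy (Suc M)" by (rule sum_lessThan_telescope')
  also have "\<dots> \<le> 1/4" using energy_0_le energy_nonneg[of "Suc M"] by linarith
  finally show ?thesis .
qed

lemma v_settled:
  assumes quiet: "\<And>u. s \<le> u \<Longrightarrow> u < t \<Longrightarrow> no_new_edge u" and k: "k < n"
    and u: "s + settle_steps eps \<le> u" "u \<le> t"
  shows "norm (v (Suc t) k - v (Suc u) k) \<le> eps / 4"
proof -
  let ?q = "rate eps"
  have q: "0 < ?q" "?q < 1" using rate_pos rate_lt_1 eps_pos eps_lt_1 by auto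
  have "norm (v (Suc t) k - v (Suc u) k) \<le> ?q ^ (Suc u - s) / (2 * eps * (1 - ?q))"
    by (rule norm_v_diff_le_rate[OF quiet k]) (use u in auto)
  also have "\<dots> \<le> ?q ^ settle_steps eps / (2 * eps * (1 - ?q))"
    using q u eps_pos by (intro divide_right_mono power_decreasing) auto
  also have "\<dots> \<le> (eps^2 * (1 - ?q) / 2) / (2 * eps * (1 - ?q))"
    using rate_pow_settle_steps[OF eps_pos eps_lt_1] q eps_pos by (intro divide_right_mono) auto
  also have "\<dots> = eps / 4" using q eps_pos by (simp add: field_simps power2_eq_square)
  finally show ?thesis .
qed

text \<open>Once velocities have settled, two birds whose relative velocity exceeds \<open>eps\<close>
  drift apart linearly, while positions grow at most like \<open>t / 2\<close>; so a new edge,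
  which needs both, must occur within a bounded time after any quiet start.\<close>
lemma new_edge_before_horizon:
  assumes quiet: "\<And>u. s \<le> u \<Longrightarrow> u < t \<Longrightarrow> no_new_edge u" and new: "\<not> no_new_edge t"
  shows "t < horizon eps s"
proof -
  obtain i j where ij: "i < n" "j < n" and near: "norm (x (Suc t) i - x (Suc t) j) \<le> r"
    and gap: "eps < norm (v (Suc t) i - v (Suc t) j)"
    using new by (rule new_edge_witness)
  define s1 where "s1 = s + settle_steps eps"
  define p where "p \<tau> = x \<tau> i - x \<tau> j" for \<tau>
  have "real (Suc t) \<le> real s1 + 2 * (3 + real s1) / eps"
  proof (cases "Suc t \<le> s1")
    case True
    have "0 \<le> 2 * (3 + real s1) / eps" using eps_pos by simp
    then show ?thesis using True by linarith
  next
    case False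
    let ?z = "v (Suc t) i - v (Suc t) j"
    have "real (Suc t - s1) * (norm ?z - eps / 2) \<le> norm (p (Suc t) - p s1)"
    proof (rule drift_lower_bound)
      fix u assume "s1 \<le> u" "u < Suc t"
      then have "norm (v (Suc t) i - v (Suc u) i) \<le> eps / 4" "norm (v (Suc t) j - v (Suc u) j) \<le> eps / 4"
        using v_settled[OF quiet] ij unfolding s1_def by auto
      moreover have "p (Suc u) - p u - ?z = (v (Suc t) j - v (Suc u) j) - (v (Suc t) i - v (Suc u) i)"
        unfolding p_def using x_Suc ij by simp
      ultimately show "norm (p (Suc u) - p u - ?z) \<le> eps / 2"
        using norm_triangle_ineq4[of "v (Suc t) j - v (Suc u) j" "v (Suc t) i - v (Suc u) i"]
        by (simp only:)
    qed (use False in simp)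
    moreover have "norm (p (Suc t) - p s1) \<le> 3 + real s1"
    proof -
      have "norm (p (Suc t) - p s1) \<le> norm (p (Suc t)) + (norm (x s1 i) + norm (x s1 j))"
        unfolding p_def by (metis norm_triangle_ineq4 add_left_mono order_trans)
      then show ?thesis
        using near r_le_1 norm_x_le[OF ij(1), of s1] norm_x_le[OF ij(2), of s1] unfolding p_def by simp
    qed
    moreover have "real (Suc t - s1) * (eps / 2) \<le> real (Suc t - s1) * (norm ?z - eps / 2)"
      using gap by (intro mult_left_mono) auto
    ultimately have "real (Suc t - s1) * eps \<le> 2 * (3 + real s1)" by simp
    then show ?thesis using False eps_pos by (simp add: field_simps)
  qed
  then show ?thesis unfolding horizon_def s1_def using le_nat_ceiling by fastforce
qed

lemma new_edge_within_horizon: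
  assumes "s \<le> u" "\<not> no_new_edge u"
  shows "\<exists>u'. s \<le> u' \<and> u' < horizon eps s \<and> \<not> no_new_edge u'"
proof -
  have "\<not> no_new_edge (s + (u - s))" using assms by simp
  from ex_least_nat_le[of "\<lambda>k. \<not> no_new_edge (s + k)", OF this]
  obtain k where first: "\<And>k'. k' < k \<Longrightarrow> no_new_edge (s + k')" and new: "\<not> no_new_edge (s + k)"
    by blast
  have "no_new_edge u'" if "s \<le> u'" "u' < s + k" for u'
    using first[of "u' - s"] that by simp
  then have "s + k < horizon eps s" by (rule new_edge_before_horizon[OF _ new])
  with new show ?thesis by (intro exI[of _ "s + k"]) simp
qed

text \<open>Every window \<open>[s, horizon eps s)\<close> after the first new edge contains another one,
  so new edges up to time \<open>u\<close> are at least as many as the windows fitting below \<open>u\<close>.\<close>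
lemma card_new_edges_ge:
  "\<not> no_new_edge u \<Longrightarrow> (horizon eps ^^ j) 0 \<le> u \<Longrightarrow> j \<le> card {w. w < (horizon eps ^^ j) 0 \<and> \<not> no_new_edge w}"
proof (induction j)
  case (Suc j)
  let ?s = "(horizon eps ^^ j) 0"
  let ?A = "\<lambda>b. {w. w < b \<and> \<not> no_new_edge w}"
  have less: "?s < horizon eps ?s" by (rule less_horizon[OF eps_pos eps_lt_1])
  obtain u' where u': "?s \<le> u'" "u' < horizon eps ?s" "\<not> no_new_edge u'"
    using new_edge_within_horizon[of ?s u] Suc.prems less by auto
  have "Suc (card (?A ?s)) = card (insert u' (?A ?s))"
    using u' by (intro card_insert_disjoint[symmetric]) auto
  also have "\<dots> \<le> card (?A (horizon eps ?s))"
    using u' less by (intro card_mono) auto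
  finally have "Suc (card (?A ?s)) \<le> card (?A (horizon eps ?s))" .
  moreover have "j \<le> card (?A ?s)" using Suc less by simp
  ultimately show ?case by simp
qed simp

lemma no_new_edge_after_quiet_time: "quiet_time eps \<le> u \<Longrightarrow> no_new_edge u"
proof (rule ccontr)
  assume u: "quiet_time eps \<le> u" and new: "\<not> no_new_edge u"
  let ?A = "{w. w < quiet_time eps \<and> \<not> no_new_edge w}"
  have "Suc (max_new_edges eps) \<le> card ?A"
    using card_new_edges_ge[OF new] u unfolding quiet_time_def by blast
  then have "(real (max_new_edges eps) + 1) * eps^4 \<le> real (card ?A) * eps^4"
    by (intro mult_right_mono) auto
  also have "\<dots> \<le> 1/4" by (rule card_new_edges_le) auto
  finally have "real (max_new_edges eps) * eps^4 + eps^4 \<le> 1/4" by (simp add: algebra_simps)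
  moreover have "1 / (4 * eps^4) \<le> real (max_new_edges eps)"
    unfolding max_new_edges_def by (rule real_nat_ceiling_ge)
  then have "1/4 \<le> real (max_new_edges eps) * eps^4"
    using eps_pos by (simp add: field_simps)
  moreover have "0 < eps^4" using eps_pos by simp
  ultimately show False by linarith
qed

lemma norm_v_step_le_step_const: "i < n \<Longrightarrow> norm (v (Suc u) i - v u i) \<le> step_const eps * rate eps ^ u"
proof -
  assume i: "i < n"
  let ?q = "rate eps" and ?T = "quiet_time eps"
  have q: "0 < ?q" "?q < 1" using rate_pos rate_lt_1 eps_pos eps_lt_1 by auto
  have "norm (v (Suc u) i - v u i) \<le> max 1 (1 / (2 * eps)) * (?q ^ u / ?q ^ ?T)"
  proof (cases "u < ?T")
    case True
    have "norm (v (Suc u) i - v u i) \<le> 1"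
      using norm_v_le[OF i, of "Suc u"] norm_v_le[OF i, of u] vmax_le norm_triangle_ineq4[of "v (Suc u) i" "v u i"]
      by linarith
    also have "\<dots> \<le> ?q ^ u / ?q ^ ?T" using True q by (simp add: power_decreasing)
    also have "\<dots> \<le> max 1 (1 / (2 * eps)) * (?q ^ u / ?q ^ ?T)"
      by (rule order_trans[OF _ mult_right_mono[OF max.cobounded1]]) (use q in simp_all)
    finally show ?thesis .
  next
    case False
    then have "norm (v (Suc u) i - v u i) \<le> ?q ^ (u - ?T) / (2 * eps)"
      using norm_v_step_le_rate[OF no_new_edge_after_quiet_time i] by simp
    also have "\<dots> = 1 / (2 * eps) * (?q ^ u / ?q ^ ?T)"
      using False q by (simp add: power_diff)
    also have "\<dots> \<le> max 1 (1 / (2 * eps)) * (?q ^ u / ?q ^ ?T)"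
      using q by (intro mult_right_mono) auto
    finally show ?thesis .
  qed
  then show ?thesis by (simp add: step_const_def)
qed

lemma velocity_average_le:
  assumes i: "i < n" and t: "0 < t"
  shows "norm (v t i - (1 / real t) *\<^sub>R (x t i - x 0 i)) \<le> step_const eps / (1 - rate eps)^2 / real t"
  using norm_diff_average_le[OF _ _ _ t norm_v_step_le_step_const[OF i]]
    rate_pos[OF eps_pos eps_lt_1] rate_lt_1[OF eps_pos eps_lt_1]
  by (simp add: x_eq_sum[OF i, of t] step_const_def)

end

lemma (in flocking) velocity_average_le_const:
  assumes "eps < 1" and i: "i < n" and t: "0 < t"
  shows "norm (v t i - (1 / real t) *\<^sub>R (x t i - x 0 i)) \<le> step_const eps / (1 - rate eps)^2 / real t"
proof (cases "\<exists>s p q. edge s p q")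
  case True
  then obtain s p q where "edge s p q" by blast
  then interpret active_flocking n r eps a x v
    by unfold_locales (use edge_imp_eps_small[OF \<open>edge s p q\<close>] in auto)
  show ?thesis using velocity_average_le[OF i t] .
next
  case False
  then have "v s i = v 0 i" for s using v_const_if_no_edge[OF _ i] by blast
  then have "v (Suc s) i = v t i" for s by metis
  then have "x t i - x 0 i = real t *\<^sub>R v t i"
    using x_eq_sum[OF i, of t] by (simp add: sum_constant_scaleR del: sum_constant)
  moreover have "0 \<le> step_const eps"
    using eps_pos \<open>eps < 1\<close> rate_pos[of eps] by (simp add: step_const_def)
  ultimately show ?thesis using t by simp
qed

lemma div_le_log_bound:
  fixes Z P :: real and t :: nat
  assumes Z: "0 \<le> Z" and P: "1 \<le> P" and t: "2 \<le> t"
  shows "Z / real t \<le> Z / ln 2 * P * ln (real t) / real t"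
proof -
  have "1 \<le> ln (real t) / ln 2" using t by simp
  also have "\<dots> \<le> P * (ln (real t) / ln 2)"
    using mult_right_mono[OF P, of "ln (real t) / ln 2"] t by simp
  finally have "Z * 1 \<le> Z * (P * (ln (real t) / ln 2))" using Z by (rule mult_left_mono)
  then have "Z * 1 / real t \<le> Z * (P * (ln (real t) / ln 2)) / real t"
    by (rule divide_right_mono) simp
  then show ?thesis by (simp add: divide_inverse mult_ac)
qed

lemma (in flocking) velocity_average_log_bound:
  assumes "eps < 1" and "i < n" and "1 < t"
  shows "norm (v t i - (1 / real t) *\<^sub>R (x t i - x 0 i))
    \<le> step_const eps / (1 - rate eps)^2 / ln 2 * real n ^ k * (1 / Min (a ` {..<n})) ^ l
      * ln (real t) / real t"
proof -
  have "1 \<le> 1 / Min (a ` {..<n})"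
    using rho_pos rho_le_half unfolding rho_def by simp
  then have "1 * 1 \<le> real n ^ k * (1 / Min (a ` {..<n})) ^ l"
    using n_ge_1 by (intro mult_mono one_le_power) auto
  moreover have "0 \<le> step_const eps / (1 - rate eps)^2"
    using eps_pos \<open>eps < 1\<close> rate_pos[of eps] by (simp add: step_const_def)
  ultimately have "step_const eps / (1 - rate eps)^2 / real t
      \<le> step_const eps / (1 - rate eps)^2 / ln 2 * (real n ^ k * (1 / Min (a ` {..<n})) ^ l)
        * ln (real t) / real t"
    using \<open>1 < t\<close> by (intro div_le_log_bound) auto
  with velocity_average_le_const[OF assms(1,2), of t] \<open>1 < t\<close> show ?thesis
    by (simp only: mult.assoc) linarith
qed

theorem lemma1:
  "\<exists>eps0>0. \<forall>eps. 0 < eps \<and> eps < eps0 \<longrightarrow>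
    (\<exists>c::real. \<forall>(n::nat) (m::nat) r a x v.
       n \<ge> 1 \<longrightarrow> flocking_system n r eps a x v \<longrightarrow>
       (\<forall>t. card (flocks n r eps x v t) \<le> m) \<longrightarrow>
       (\<forall>i<n. \<forall>t::nat. t > 1 \<longrightarrow>
          norm (v t i - (1 / real t) *\<^sub>R (x t i - x 0 i))
            \<le> c * real n ^ (2 * (m + 2)) * (1 / Min (a ` {..<n})) ^ (m + 1)
                * ln (real t) / real t))"
  by (rule exI[of _ 1], intro conjI allI impI exI)
    (simp, blast intro: flocking.velocity_average_log_bound flocking.intro)

end
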